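(* Let $k\ge2$, $n\ge1$, $A=\{0<1<\cdots<k-1\}$, and let $M$ be a de Bruijn set of span $n$ over $A$. Then $M$ contains a necklace of length at least $n$.
   Context: A word is primitive if not a proper power of another word; a necklace is the set of conjugates ($xy\sim yx$) of a primitive word, and its length is the length of its words. A multiset $M=\{n_{1},\dots,n_{t}\}$ of necklaces is a de Bruijn set of span $n$ over $A$ if $|n_{1}|+\cdots+|n_{t}|=k^{n}$ and every word of $A^{n}$ is a prefix of some power of some word belonging to one of the $n_{i}$. *)

theory Defs
  imports Main "HOL-Library.Multiset" "HOL-Library.Sublist"
begin

definition word_pow :: "'a list \<Rightarrow> nat \<Rightarrow> 'a list" where
  "word_pow u m = concat (replicate m u)"

definition primitive :: "'a list \<Rightarrow> bool" where
  "primitive w \<longleftrightarrow> w \<noteq> [] \<and> \<not> (\<exists>u m. m \<ge> 2 \<and> w = word_pow u m)"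

definition conjugates :: "'a list \<Rightarrow> 'a list set" where
  "conjugates w = {v. \<exists>x y. w = x @ y \<and> v = y @ x}"

definition is_necklace :: "'a set \<Rightarrow> 'a list set \<Rightarrow> bool" where
  "is_necklace A N \<longleftrightarrow> (\<exists>w. primitive w \<and> set w \<subseteq> A \<and> N = conjugates w)"

definition necklace_length :: "'a list set \<Rightarrow> nat" where
  "necklace_length N = length (SOME w. w \<in> N)"

definition de_bruijn_set :: "nat \<Rightarrow> nat \<Rightarrow> nat list set multiset \<Rightarrow> bool" where
  "de_bruijn_set k n M \<longleftrightarrow>
     (\<forall>N\<in>#M. is_necklace {0..<k} N) \<and>
     (\<Sum>N\<in>#M. necklace_length N) = k ^ n \<and>
     (\<forall>u. length u = n \<and> set u \<subseteq> {0..<k} \<longrightarrow>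
        (\<exists>N\<in>#M. \<exists>w\<in>N. \<exists>m. prefix u (word_pow w m)))"

end

theory Submission
  imports Defs
begin

text \<open>The word \<open>0\<^sup>n\<^sup>-\<^sup>1 1\<close> must be a prefix of a power of some word \<open>w\<close> of a necklace of \<open>M\<close>.
  If \<open>|w| < n\<close>, then \<open>w\<close> is itself a prefix of \<open>0\<^sup>n\<^sup>-\<^sup>1 1\<close>, hence consists of zeros only, and so
  do all its powers, which therefore cannot contain the letter \<open>1\<close>.\<close>

lemma set_word_pow_subset: "set (word_pow w m) \<subseteq> set w"
  by (auto simp: word_pow_def)

lemma prefix_word_pow_imp_prefix:
  assumes "prefix u (word_pow w m)" and "u \<noteq> []" and "length w \<le> length u"
  shows "prefix w u"
proof -
  obtain m' where "m = Suc m'"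
    using assms(1,2) by (cases m) (auto simp: word_pow_def)
  then have "prefix u (w @ word_pow w m')"
    using assms(1) by (simp add: word_pow_def)
  moreover have "prefix w (w @ word_pow w m')"
    by simp
  ultimately show ?thesis
    using prefix_length_prefix assms(3) by blast
qed

lemma replicate_snoc_prefix_word_pow_imp_length_gt:
  assumes "prefix (replicate d a @ [b]) (word_pow w m)" and "a \<noteq> b"
  shows "d < length w"
proof (rule ccontr)
  assume "\<not> d < length w"
  then have "prefix w (replicate d a @ [b])"
    using prefix_word_pow_imp_prefix[OF assms(1)] by simp
  then obtain zs where "w @ zs = replicate d a @ [b]"
    by (auto simp: prefix_def)
  then have "w = take (length w) (replicate d a @ [b])"
    unfolding append_eq_conv_conj by (rule conjunct1)
  also have "\<dots> = replicate (length w) a"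
    using \<open>\<not> d < length w\<close> by simp
  finally have "set w = set (replicate (length w) a)"
    by (rule arg_cong)
  then have "set (word_pow w m) \<subseteq> {a}"
    using set_word_pow_subset[of w m] by auto
  moreover have "b \<in> set (word_pow w m)"
    using assms(1) by (rule set_mono_prefix[THEN subsetD]) simp
  ultimately show False
    using assms(2) by blast
qed

lemma length_conjugates: "v \<in> conjugates w \<Longrightarrow> length v = length w"
  by (auto simp: conjugates_def)

lemma necklace_length_conjugates:
  assumes "v \<in> conjugates w"
  shows "necklace_length (conjugates w) = length v"
proof -
  have "w \<in> conjugates w"
    unfolding conjugates_def by blast
  then have "(SOME v. v \<in> conjugates w) \<in> conjugates w"
    by (rule someI)
  then show ?thesis
    using assms length_conjugates unfolding necklace_length_def by metis
qed

theorem lemma3p3: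
  fixes k n :: nat and M :: "nat list set multiset"
  assumes "k \<ge> 2" and "n \<ge> 1" and "de_bruijn_set k n M"
  shows "\<exists>N\<in>#M. necklace_length N \<ge> n"
proof -
  define u :: "nat list" where "u = replicate (n - 1) 0 @ [1]"
  have "length u = n" and "set u \<subseteq> {0..<k}"
    using assms(1,2) by (auto simp: u_def)
  then obtain N w m where N: "N \<in># M" and "w \<in> N" and "prefix u (word_pow w m)"
    using assms(3) unfolding de_bruijn_set_def by blast
  moreover obtain w0 where "N = conjugates w0"
    using assms(3) N unfolding de_bruijn_set_def is_necklace_def by blast
  ultimately have "necklace_length N = length w"
    using necklace_length_conjugates by blast
  moreover have "n - 1 < length w"
    using replicate_snoc_prefix_word_pow_imp_length_gt \<open>prefix u (word_pow w m)\<close>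
    unfolding u_def by fastforce
  ultimately show ?thesis
    using N assms(2) by (intro bexI[of _ N]) auto
qed

end
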